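(* In any algorithm solving the Knot Identification Problem on a computation $\sigma$, every knot output by any process is globally observable in $\sigma$.
   Context: A network consists of finitely many processes with unique identifiers. A state is a set of directed links between processes; a computation $\sigma=s_1,s_2,\dots$ is an infinite sequence of states. Causal precedence among events (local steps of processes and occurrences of links in states) is the smallest transitive relation such that $e_1$ precedes $e_2$ if both occur at the same process with $e_1$ earlier, or if there is a link from $p_1$ to $p_2$ with $e_1$ at $p_1$ before the link and $e_2$ at $p_2$ after it. The local observation graph $LG(p,\sigma,i)$ is the graph of all links (with their endpoints) that causally precede the events at $p$ in state $s_i$. A knot of a directed graph is a set of at least two processes inducing a strongly connected subgraph with no incoming links from outside the set. Process $p$ observes knot $K$ in $\sigma$ if $K$ is a knot contained in $LG(p,\sigma,i)$ for some state $s_i$; $K$ is globally observable in $\sigma$ if every process observes it. Standing convention: a process may output only a knot that it has observed. Knot Identification Problem: each process outputs a set of processes $K$ forming a knot in the computation, such that (KI Agreement) if one process outputs $K$ then every process's output is $K$, and (KI Termination) every process outputs a knot. *)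

theory Defs
  imports Main
begin

type_synonym 'p state = "('p \<times> 'p) set"
type_synonym 'p computation = "nat \<Rightarrow> 'p state"

text \<open>Events: the local step of process p in state i, and the occurrence of the
link (p,q) in state i.\<close>

datatype 'p event = Step 'p nat | Link 'p 'p nat

definition prec_base :: "'p computation \<Rightarrow> ('p event \<times> 'p event) set" where
  "prec_base \<sigma> =
     {(Step p i, Step p j) | p i j. i < j}
   \<union> {(Step p i, Link p q j) | p q i j. i \<le> j \<and> (p, q) \<in> \<sigma> j}
   \<union> {(Link p q j, Step q k) | p q j k. j < k \<and> (p, q) \<in> \<sigma> j}"

definition causal_prec :: "'p computation \<Rightarrow> ('p event \<times> 'p event) set" where
  "causal_prec \<sigma> = (prec_base \<sigma>)\<^sup>+"

definition LG :: "'p \<Rightarrow> 'p computation \<Rightarrow> nat \<Rightarrow> ('p \<times> 'p) set" where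
  "LG p \<sigma> i = {(u, v). \<exists>j. (Link u v j, Step p i) \<in> causal_prec \<sigma>}"

definition is_knot :: "('p \<times> 'p) set \<Rightarrow> 'p set \<Rightarrow> bool" where
  "is_knot E K \<longleftrightarrow>
     finite K \<and> card K \<ge> 2 \<and>
     (\<forall>u\<in>K. \<forall>v\<in>K. (u, v) \<in> (E \<inter> (K \<times> K))\<^sup>+) \<and>
     (\<forall>u v. (u, v) \<in> E \<and> v \<in> K \<longrightarrow> u \<in> K)"

definition observes_at :: "'p \<Rightarrow> 'p computation \<Rightarrow> nat \<Rightarrow> 'p set \<Rightarrow> bool" where
  "observes_at p \<sigma> i K \<longleftrightarrow> is_knot (LG p \<sigma> i) K"

definition observes :: "'p \<Rightarrow> 'p computation \<Rightarrow> 'p set \<Rightarrow> bool" where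
  "observes p \<sigma> K \<longleftrightarrow> (\<exists>i. observes_at p \<sigma> i K)"

definition globally_observable :: "'p computation \<Rightarrow> 'p set \<Rightarrow> bool" where
  "globally_observable \<sigma> K \<longleftrightarrow> (\<forall>p. observes p \<sigma> K)"

text \<open>Outcome of an algorithm on a computation: each process either never outputs
(None) or outputs a set K at state t (Some (t, K)).  The algorithm solves the
Knot Identification Problem on \<sigma> if it respects the standing convention
(a process outputs only a knot it has observed, at or before its output time),
KI Agreement and KI Termination.\<close>

definition solves_KI :: "'p computation \<Rightarrow> ('p \<Rightarrow> (nat \<times> 'p set) option) \<Rightarrow> bool" where
  "solves_KI \<sigma> out \<longleftrightarrow>
     (\<forall>p t K. out p = Some (t, K) \<longrightarrow> (\<exists>i\<le>t. observes_at p \<sigma> i K)) \<and>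
     (\<forall>p t K. out p = Some (t, K) \<longrightarrow> (\<forall>q. \<exists>t'. out q = Some (t', K))) \<and>
     (\<forall>p. \<exists>t K. out p = Some (t, K) \<and> is_knot (\<Union>i. \<sigma> i) K)"

end

theory Submission
  imports Defs
begin

text \<open>By KI Agreement every process q outputs the same knot K, and by the standing
convention q has observed every knot it outputs; hence every process observes K.\<close>

theorem proposition2:
  fixes \<sigma> :: "('p::finite) computation"
    and out :: "'p \<Rightarrow> (nat \<times> 'p set) option"
  assumes "solves_KI \<sigma> out"
    and "out p = Some (t, K)"
  shows "globally_observable \<sigma> K"
  unfolding globally_observable_def observes_def
proof
  fix q
  from assms obtain t' where q_outputs_K: "out q = Some (t', K)"
    unfolding solves_KI_def by blast
  with assms(1) show "\<exists>i. observes_at q \<sigma> i K"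
    unfolding solves_KI_def by blast
qed

end
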